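(* Let $k\ge1$ and $\sigma\in\mathcal P_{4k}\setminus\mathcal D_{4k}$. With the sets $D_1,\dots,D_4,O_1,O_2,O_3,O_{4,1},O_{4,2},O_5,O_6$ defined in the context, $$\mathrm{Ord}_1:=|D_1|+\tfrac35|D_2|+\tfrac35|D_3|+\tfrac15|D_4|+\tfrac65|O_1|+\tfrac12|O_2|+\tfrac3{10}|O_3|-\tfrac15|O_{4,1}|-\tfrac15|O_{4,2}|-\tfrac25|O_5|-\tfrac35|O_6|<\frac{6k}{5}.$$
   Context: $\mathcal P_{4k}$ is the set of permutations $\sigma$ of $\{1,\dots,4k\}$ with $\sigma_1<\sigma_3<\dots<\sigma_{4k-1}$ and $\sigma_{2\ell-1}<\sigma_{2\ell}$ for all $\ell$; $\mathcal D_{4k}=\{\sigma\in\mathcal P_{4k}:\lceil\sigma_{2\ell-1}/4\rceil=\lceil\sigma_{2\ell}/4\rceil\ \forall\ell\}$. For $\sigma\in\mathcal P_{4k}$ consider the $2k$ pairs $(i,j)=(\sigma_{2\ell-1},\sigma_{2\ell})$, $1\le\ell\le2k$ (so $i<j$). For an index $m$ let $r(m)\in\{1,2,3,4\}$ with $r(m)\equiv m\pmod 4$, and call $\lceil m/4\rceil$ its block. A pair $(i,j)$ with $\lceil i/4\rceil=\lceil j/4\rceil$ belongs to $D_1$ if $(r(i),r(j))=(1,2)$; to $D_2$ if $(r(i),r(j))\in\{(1,3),(1,4)\}$; to $D_3$ if $(r(i),r(j))\in\{(2,3),(2,4)\}$; to $D_4$ if $(r(i),r(j))=(3,4)$. A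 pair with $\lceil i/4\rceil<\lceil j/4\rceil$ belongs to $O_1$ if $(r(i),r(j))=(1,1)$; to $O_2$ if $\{r(i),r(j)\}=\{1,2\}$; to $O_3$ if one of $r(i),r(j)$ is $1$ and the other is $3$ or $4$; to $O_{4,1}$ if $(r(i),r(j))=(2,2)$; to $O_{4,2}$ if $(r(i),r(j))=(3,3)$; to $O_{5,1}$ if one of $r(i),r(j)$ is $2$ and the other is $3$ or $4$; to $O_{5,2}$ if $\{r(i),r(j)\}=\{3,4\}$; to $O_6$ if $(r(i),r(j))=(4,4)$. Set $O_5=O_{5,1}\cup O_{5,2}$. $|\cdot|$ denotes cardinality. *)

theory Defs
  imports "HOL-Combinatorics.Permutations" Complex_Main
begin

definition blk :: "nat \<Rightarrow> nat" where "blk m = (m + 3) div 4"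
definition rr :: "nat \<Rightarrow> nat" where "rr m = (if m mod 4 = 0 then 4 else m mod 4)"

definition inP :: "nat \<Rightarrow> (nat \<Rightarrow> nat) \<Rightarrow> bool" where
  "inP k \<sigma> \<longleftrightarrow> \<sigma> permutes {1..4*k}
     \<and> (\<forall>l\<in>{1..<2*k}. \<sigma> (2*l-1) < \<sigma> (2*l+1))
     \<and> (\<forall>l\<in>{1..2*k}. \<sigma> (2*l-1) < \<sigma> (2*l))"

definition inD :: "nat \<Rightarrow> (nat \<Rightarrow> nat) \<Rightarrow> bool" where
  "inD k \<sigma> \<longleftrightarrow> inP k \<sigma> \<and> (\<forall>l\<in>{1..2*k}. blk (\<sigma> (2*l-1)) = blk (\<sigma> (2*l)))"

definition pairs :: "nat \<Rightarrow> (nat \<Rightarrow> nat) \<Rightarrow> (nat \<times> nat) set" where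
  "pairs k \<sigma> = (\<lambda>l. (\<sigma> (2*l-1), \<sigma> (2*l))) ` {1..2*k}"

definition diag :: "nat \<times> nat \<Rightarrow> bool" where "diag p \<longleftrightarrow> blk (fst p) = blk (snd p)"
definition offd :: "nat \<times> nat \<Rightarrow> bool" where "offd p \<longleftrightarrow> blk (fst p) < blk (snd p)"

definition rpair :: "nat \<times> nat \<Rightarrow> nat \<times> nat" where "rpair p = (rr (fst p), rr (snd p))"

definition cls :: "(nat \<times> nat \<Rightarrow> bool) \<Rightarrow> (nat \<times> nat) set \<Rightarrow> nat \<Rightarrow> (nat \<Rightarrow> nat) \<Rightarrow> nat" where
  "cls B R k \<sigma> = card {p \<in> pairs k \<sigma>. B p \<and> rpair p \<in> R}"

definition Ord1 :: "nat \<Rightarrow> (nat \<Rightarrow> nat) \<Rightarrow> real" where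
  "Ord1 k \<sigma> =
     real (cls diag {(1,2)} k \<sigma>)
   + 3/5 * real (cls diag {(1,3),(1,4)} k \<sigma>)
   + 3/5 * real (cls diag {(2,3),(2,4)} k \<sigma>)
   + 1/5 * real (cls diag {(3,4)} k \<sigma>)
   + 6/5 * real (cls offd {(1,1)} k \<sigma>)
   + 1/2 * real (cls offd {(1,2),(2,1)} k \<sigma>)
   + 3/10 * real (cls offd {(1,3),(1,4),(3,1),(4,1)} k \<sigma>)
   - 1/5 * real (cls offd {(2,2)} k \<sigma>)
   - 1/5 * real (cls offd {(3,3)} k \<sigma>)
   - 2/5 * real (cls offd {(2,3),(2,4),(3,2),(4,2),(3,4),(4,3)} k \<sigma>)
   - 3/5 * real (cls offd {(4,4)} k \<sigma>)"

end

theory Submission imports Defs begin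

text \<open>
  Discharging. The weight of every pair is split between its two endpoints: a pair inside a
  block gives each endpoint half of its weight, while an endpoint of a pair joining two blocks
  is charged an amount depending only on its residue, and these amounts dominate every
  off-diagonal weight. The charges of the four indices of a block then depend only on which
  residues are matched to each other inside the block, and a finite check shows that they sum
  to at most 6/5, with a margin of 1/40 as soon as one index is matched outside its block.
  Since \<sigma> is not in \<open>\<D>\<^sub>4\<^sub>k\<close>, at least one block has such an index.
\<close>

lemma blk_rr_mult4_add: "blk (4*q + r) = q + (r+3) div 4 \<and> rr (4*q + r) = (if r mod 4 = 0 then 4 else r mod 4)"
proof -
  have "(4*q + r + 3) div 4 = q + (r+3) div 4" by simp
  moreover have "(4*q + r) mod 4 = r mod 4" by simp
  ultimately show ?thesis unfolding blk_def rr_def by simp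
qed

lemma blk_rr_decompose: "m \<ge> 1 \<Longrightarrow> m + 4 = 4 * blk m + rr m \<and> 1 \<le> rr m \<and> rr m \<le> 4"
proof -
  assume m: "m \<ge> 1"
  have e: "m = 4*(m div 4) + m mod 4" by simp
  have "m mod 4 = 0 \<or> m mod 4 = 1 \<or> m mod 4 = 2 \<or> m mod 4 = 3" by auto
  then show ?thesis using m blk_rr_mult4_add[of "m div 4" "m mod 4"] by (subst (1 2 3) e) auto
qed

lemma blk_rr_block_index: "b \<ge> 1 \<Longrightarrow> t \<in> {1..4} \<Longrightarrow> blk (4*b-4+t) = b \<and> rr (4*b-4+t) = t"
proof -
  assume b: "b \<ge> 1" and t: "t \<in> {1..4}"
  have e: "4*b-4+t = 4*(b-1) + t" using b by auto
  have "t = 1 \<or> t = 2 \<or> t = 3 \<or> t = 4" using t by auto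
  then show ?thesis unfolding e using blk_rr_mult4_add[of "b-1" t] b by (elim disjE) auto
qed

lemma sum_consecutive_pairs: "(\<Sum>l=1..n::nat. f (2*l-1) + f (2*l)) = (\<Sum>j=1..2*n. (f j::real))"
proof (induction n)
  case 0 then show ?case by simp
next
  case (Suc n)
  have "{1..2*Suc n} = {1..2*n} \<union> {2*n+1, 2*n+2}" by auto
  then show ?case using Suc by simp
qed

lemma sum_by_blocks: "(\<Sum>m=1..4*(k::nat). (v m::real)) = (\<Sum>b=1..k. \<Sum>t=1..4. v (4*b-4+t))"
proof (induction k)
  case 0 then show ?case by simp
next
  case (Suc k)
  have "{1..4*Suc k} = {1..4*k} \<union> {4*k+1, 4*k+2, 4*k+3, 4*k+4}" by auto
  moreover have "{1..4::nat} = {1,2,3,4}" by auto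
  ultimately show ?case using Suc by (simp add: ac_simps)
qed

definition cross_charge :: "nat \<Rightarrow> real" where
  "cross_charge r = (if r = 1 then 5/8 else if r = 2 then 0 else if r = 3 then -1/20 else -1/5)"

definition inner_weight :: "nat \<Rightarrow> nat \<Rightarrow> real" where
  "inner_weight r s = (if {r,s} = {1,2} then 1 else if {r,s} = {3,4} then 1/5 else 3/5)"

text \<open>Charge of residue \<open>t\<close> matched to residue \<open>s\<close> of the same block; \<open>s = 0\<close> encodes a
  partner in another block.\<close>
definition block_charge :: "nat \<Rightarrow> nat \<Rightarrow> real" where
  "block_charge t s = (if s = 0 then cross_charge t else inner_weight t s / 2)"

definition charge :: "(nat \<Rightarrow> nat) \<Rightarrow> nat \<Rightarrow> real" where
  "charge M m = (if blk (M m) = blk m then inner_weight (rr m) (rr (M m)) / 2 else cross_charge (rr m))"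

lemma block_charge_sum_le_cases:
  fixes a b c d :: nat
  assumes "a = 0 \<or> a = 2 \<or> a = 3 \<or> a = 4" "b = 0 \<or> b = 1 \<or> b = 3 \<or> b = 4"
    "c = 0 \<or> c = 1 \<or> c = 2 \<or> c = 4" "d = 0 \<or> d = 1 \<or> d = 2 \<or> d = 3"
    "a = 2 \<longleftrightarrow> b = 1" "a = 3 \<longleftrightarrow> c = 1" "a = 4 \<longleftrightarrow> d = 1"
    "b = 3 \<longleftrightarrow> c = 2" "b = 4 \<longleftrightarrow> d = 2" "c = 4 \<longleftrightarrow> d = 3"
  shows "block_charge 1 a + block_charge 2 b + block_charge 3 c + block_charge 4 d
         + (if a = 0 \<or> b = 0 \<or> c = 0 \<or> d = 0 then 1/40 else 0) \<le> 6/5"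
  using assms
  by (elim disjE; simp add: block_charge_def cross_charge_def inner_weight_def doubleton_eq_iff)

lemma block_charge_sum_le:
  assumes "\<forall>t\<in>{1..4::nat}. P t \<le> 4 \<and> P t \<noteq> t \<and> (P t \<noteq> 0 \<longrightarrow> P (P t) = t)"
  shows "(\<Sum>t=1..4. block_charge t (P t)) + (if \<exists>t\<in>{1..4}. P t = 0 then 1/40 else 0) \<le> 6/5"
proof -
  have s: "{1..4::nat} = {1,2,3,4}" by auto
  have A: "P 1 \<le> 4" "P 1 \<noteq> 1" "P 1 \<noteq> 0 \<Longrightarrow> P (P 1) = 1"
     "P 2 \<le> 4" "P 2 \<noteq> 2" "P 2 \<noteq> 0 \<Longrightarrow> P (P 2) = 2"
     "P 3 \<le> 4" "P 3 \<noteq> 3" "P 3 \<noteq> 0 \<Longrightarrow> P (P 3) = 3"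
     "P 4 \<le> 4" "P 4 \<noteq> 4" "P 4 \<noteq> 0 \<Longrightarrow> P (P 4) = 4"
    using assms by (auto simp: s)
  have "P 1 = 0 \<or> P 1 = 2 \<or> P 1 = 3 \<or> P 1 = 4" "P 2 = 0 \<or> P 2 = 1 \<or> P 2 = 3 \<or> P 2 = 4"
    "P 3 = 0 \<or> P 3 = 1 \<or> P 3 = 2 \<or> P 3 = 4" "P 4 = 0 \<or> P 4 = 1 \<or> P 4 = 2 \<or> P 4 = 3"
    using A by auto
  moreover have "P 1 = 2 \<longleftrightarrow> P 2 = 1" "P 1 = 3 \<longleftrightarrow> P 3 = 1" "P 1 = 4 \<longleftrightarrow> P 4 = 1"
    "P 2 = 3 \<longleftrightarrow> P 3 = 2" "P 2 = 4 \<longleftrightarrow> P 4 = 2" "P 3 = 4 \<longleftrightarrow> P 4 = 3"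
    using A by (metis zero_neq_numeral zero_neq_one)+
  ultimately show ?thesis
    unfolding s using block_charge_sum_le_cases[of "P 1" "P 2" "P 3" "P 4"] by simp
qed

lemma charge_block_le:
  assumes M: "\<forall>m\<in>{1..4*k}. M m \<in> {1..4*k} \<and> M m \<noteq> m \<and> M (M m) = m"
    and b: "b \<in> {1..k}"
  shows "(\<Sum>t=1..4. charge M (4*b-4+t)) + (if \<exists>t\<in>{1..4}. blk (M (4*b-4+t)) \<noteq> b then 1/40 else 0) \<le> 6/5"
proof -
  define x where "x t = 4*b-4+t" for t
  define P where "P t = (if blk (M (x t)) = b then rr (M (x t)) else 0)" for t
  have x: "blk (x t) = b \<and> rr (x t) = t" "x t \<in> {1..4*k}" if "t \<in> {1..4}" for t
    using blk_rr_block_index[of b t] b that unfolding x_def by auto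
  have P: "P t \<le> 4 \<and> P t \<noteq> t \<and> (P t \<noteq> 0 \<longrightarrow> P (P t) = t)
           \<and> charge M (x t) = block_charge t (P t) \<and> (P t = 0 \<longleftrightarrow> blk (M (x t)) \<noteq> b)"
    if t: "t \<in> {1..4}" for t
  proof -
    define q where "q = M (x t)"
    have q: "q \<in> {1..4*k}" "q \<noteq> x t" "M q = x t" using M x(2)[OF t] unfolding q_def by auto
    have hq: "q + 4 = 4 * blk q + rr q" "1 \<le> rr q" "rr q \<le> 4" using blk_rr_decompose q(1) by auto
    show ?thesis
    proof (cases "blk q = b")
      case True
      have qx: "q = x (rr q)" unfolding x_def using hq True b by auto
      have "P (rr q) = t" unfolding P_def using qx[symmetric] q(3) x(1)[OF t] by simp
      then show ?thesis using hq qx q(2) x(1)[OF t] True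
        unfolding P_def charge_def block_charge_def q_def[symmetric] by auto
    next
      case False
      then show ?thesis using x(1)[OF t] t
        unfolding P_def charge_def block_charge_def q_def[symmetric] by auto
    qed
  qed
  have "(\<Sum>t=1..4. charge M (x t)) = (\<Sum>t=1..4. block_charge t (P t))"
    using P by (intro sum.cong) auto
  moreover have "(\<exists>t\<in>{1..4}. P t = 0) \<longleftrightarrow> (\<exists>t\<in>{1..4}. blk (M (x t)) \<noteq> b)"
    using P by auto
  moreover have "(\<Sum>t=1..4. block_charge t (P t)) + (if \<exists>t\<in>{1..4}. P t = 0 then 1/40 else 0) \<le> 6/5"
    using P by (intro block_charge_sum_le) blast
  ultimately show ?thesis unfolding x_def by simp
qed

definition pair_indicator :: "(nat \<times> nat \<Rightarrow> bool) \<Rightarrow> (nat \<times> nat) set \<Rightarrow> nat \<times> nat \<Rightarrow> real" where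
  "pair_indicator B R p = (if B p \<and> rpair p \<in> R then 1 else 0)"

definition pair_weight :: "nat \<times> nat \<Rightarrow> real" where
  "pair_weight p =
     pair_indicator diag {(1,2)} p
   + 3/5 * pair_indicator diag {(1,3),(1,4)} p
   + 3/5 * pair_indicator diag {(2,3),(2,4)} p
   + 1/5 * pair_indicator diag {(3,4)} p
   + 6/5 * pair_indicator offd {(1,1)} p
   + 1/2 * pair_indicator offd {(1,2),(2,1)} p
   + 3/10 * pair_indicator offd {(1,3),(1,4),(3,1),(4,1)} p
   - 1/5 * pair_indicator offd {(2,2)} p
   - 1/5 * pair_indicator offd {(3,3)} p
   - 2/5 * pair_indicator offd {(2,3),(2,4),(3,2),(4,2),(3,4),(4,3)} p
   - 3/5 * pair_indicator offd {(4,4)} p"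

lemma cls_eq_sum_pair_indicator: "real (cls B R k \<sigma>) = (\<Sum>p\<in>pairs k \<sigma>. pair_indicator B R p)"
proof -
  have f: "finite (pairs k \<sigma>)" unfolding pairs_def by simp
  have "cls B R k \<sigma> = (\<Sum>p\<in>pairs k \<sigma>. if B p \<and> rpair p \<in> R then 1 else 0)"
    unfolding cls_def card_eq_sum using sum.inter_filter[OF f, of "\<lambda>_. 1::nat"] by simp
  then show ?thesis unfolding pair_indicator_def by (simp add: if_distrib cong: if_cong)
qed

lemma Ord1_eq_sum_pair_weight: "Ord1 k \<sigma> = (\<Sum>p\<in>pairs k \<sigma>. pair_weight p)"
  unfolding Ord1_def pair_weight_def cls_eq_sum_pair_indicator
  by (simp add: sum.distrib sum_subtractf sum_distrib_left)

lemma pair_weight_le_charge: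
  assumes "a \<ge> 1" "a < b" "M a = b" "M b = a"
  shows "pair_weight (a, b) \<le> charge M a + charge M b"
proof -
  have ha: "a + 4 = 4 * blk a + rr a" "1 \<le> rr a" "rr a \<le> 4" using blk_rr_decompose assms by auto
  have hb: "b + 4 = 4 * blk b + rr b" "1 \<le> rr b" "rr b \<le> 4" using blk_rr_decompose assms by auto
  have le: "blk a \<le> blk b" and lt: "blk a = blk b \<Longrightarrow> rr a < rr b" using ha hb assms by linarith+
  have ra: "rr a = 1 \<or> rr a = 2 \<or> rr a = 3 \<or> rr a = 4" and rb: "rr b = 1 \<or> rr b = 2 \<or> rr b = 3 \<or> rr b = 4"
    using ha hb by auto
  consider "blk a = blk b" | "blk a < blk b" using le by linarith
  then show ?thesis
    by cases (use lt ra rb assms(3,4) in \<open>elim disjE; simp add: pair_weight_def pair_indicator_def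
        diag_def offd_def rpair_def charge_def inner_weight_def cross_charge_def doubleton_eq_iff\<close>)+
qed

definition partner :: "(nat \<Rightarrow> nat) \<Rightarrow> nat \<Rightarrow> nat" where
  "partner \<sigma> m = (let j = inv \<sigma> m in if odd j then \<sigma> (j+1) else \<sigma> (j-1))"

lemma partner_pair:
  assumes "inj \<sigma>" "l \<ge> 1"
  shows "partner \<sigma> (\<sigma> (2*l-1)) = \<sigma> (2*l)" "partner \<sigma> (\<sigma> (2*l)) = \<sigma> (2*l-1)"
  using assms by (auto simp: partner_def inv_f_f)

lemma inP_pair_bounds:
  assumes "inP k \<sigma>" "l \<in> {1..2*k}"
  shows "\<sigma> (2*l-1) \<in> {1..4*k}" "\<sigma> (2*l) \<in> {1..4*k}" "\<sigma> (2*l-1) < \<sigma> (2*l)"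
proof -
  have "\<sigma> permutes {1..4*k}" using assms(1) unfolding inP_def by blast
  moreover have "2*l-1 \<in> {1..4*k}" "2*l \<in> {1..4*k}" using assms(2) by auto
  ultimately show "\<sigma> (2*l-1) \<in> {1..4*k}" "\<sigma> (2*l) \<in> {1..4*k}" by (metis permutes_in_image)+
  show "\<sigma> (2*l-1) < \<sigma> (2*l)" using assms unfolding inP_def by blast
qed

lemma inP_index_pair:
  assumes "inP k \<sigma>" "m \<in> {1..4*k}"
  obtains l where "l \<in> {1..2*k}" "m = \<sigma> (2*l-1) \<or> m = \<sigma> (2*l)"
proof -
  have perm: "\<sigma> permutes {1..4*k}" using assms(1) unfolding inP_def by blast
  define j where "j = inv \<sigma> m"
  have j: "j \<in> {1..4*k}" "\<sigma> j = m"
    unfolding j_def using permutes_in_image[OF permutes_inv[OF perm]] assms(2)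
      permutes_inverses(1)[OF perm] by auto
  have "(j+1) div 2 \<in> {1..2*k}" "j = 2 * ((j+1) div 2) - 1 \<or> j = 2 * ((j+1) div 2)"
    using j(1) by auto
  then show ?thesis using that j(2) by metis
qed

lemma partner_involution:
  assumes "inP k \<sigma>" "m \<in> {1..4*k}"
  shows "partner \<sigma> m \<in> {1..4*k} \<and> partner \<sigma> m \<noteq> m \<and> partner \<sigma> (partner \<sigma> m) = m"
proof -
  have inj: "inj \<sigma>" using assms(1) permutes_inj unfolding inP_def by blast
  obtain l where l: "l \<in> {1..2*k}" "m = \<sigma> (2*l-1) \<or> m = \<sigma> (2*l)"
    using inP_index_pair[OF assms] .
  then show ?thesis
    using partner_pair[OF inj, of l] inP_pair_bounds[OF assms(1) l(1)] by auto
qed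

lemma Ord1_le_sum_charge:
  assumes "inP k \<sigma>"
  shows "Ord1 k \<sigma> \<le> (\<Sum>m=1..4*k. charge (partner \<sigma>) m)"
proof -
  have perm: "\<sigma> permutes {1..4*k}" using assms unfolding inP_def by blast
  then have inj: "inj \<sigma>" by (rule permutes_inj)
  define pf where "pf l = (\<sigma> (2*l-1), \<sigma> (2*l))" for l
  have "inj_on pf {1..2*k}"
    by (rule inj_onI) (auto simp: pf_def dest!: injD[OF inj])
  then have "Ord1 k \<sigma> = (\<Sum>l=1..2*k. pair_weight (pf l))"
    unfolding Ord1_eq_sum_pair_weight pairs_def pf_def[symmetric] by (simp add: sum.reindex)
  also have "\<dots> \<le> (\<Sum>l=1..2*k. charge (partner \<sigma>) (\<sigma> (2*l-1)) + charge (partner \<sigma>) (\<sigma> (2*l)))"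
  proof (rule sum_mono)
    fix l assume l: "l \<in> {1..2*k}"
    then show "pair_weight (pf l) \<le> charge (partner \<sigma>) (\<sigma> (2*l-1)) + charge (partner \<sigma>) (\<sigma> (2*l))"
      unfolding pf_def using inP_pair_bounds[OF assms l] partner_pair[OF inj, of l]
      by (intro pair_weight_le_charge) auto
  qed
  also have "\<dots> = (\<Sum>j=1..4*k. charge (partner \<sigma>) (\<sigma> j))"
    using sum_consecutive_pairs[of "\<lambda>j. charge (partner \<sigma>) (\<sigma> j)" "2*k"] by simp
  also have "\<dots> = (\<Sum>m=1..4*k. charge (partner \<sigma>) m)"
    using sum.reindex_bij_betw[OF permutes_imp_bij[OF perm]] by simp
  finally show ?thesis .
qed

lemma not_inD_cross_block:
  assumes "inP k \<sigma>" "\<not> inD k \<sigma>"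
  shows "\<exists>b\<in>{1..k}. \<exists>t\<in>{1..4}. blk (partner \<sigma> (4*b-4+t)) \<noteq> b"
proof -
  have inj: "inj \<sigma>" using assms(1) permutes_inj unfolding inP_def by blast
  obtain l where l: "l \<in> {1..2*k}" and nb: "blk (\<sigma> (2*l-1)) \<noteq> blk (\<sigma> (2*l))"
    using assms unfolding inD_def by auto
  define m where "m = \<sigma> (2*l-1)"
  have m: "m \<ge> 1" "m \<le> 4*k" using inP_pair_bounds(1)[OF assms(1) l] unfolding m_def by auto
  have hm: "m + 4 = 4 * blk m + rr m" "1 \<le> rr m" "rr m \<le> 4" using blk_rr_decompose[OF m(1)] by auto
  then have "blk m \<in> {1..k}" "4 * blk m - 4 + rr m = m" "rr m \<in> {1..4}" using m by auto
  moreover have "blk (partner \<sigma> m) \<noteq> blk m"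
    using partner_pair(1)[OF inj, of l] l nb unfolding m_def by simp
  ultimately show ?thesis by metis
qed

theorem lemma5p4:
  fixes k :: nat and \<sigma> :: "nat \<Rightarrow> nat"
  assumes "k \<ge> 1" and "inP k \<sigma>" and "\<not> inD k \<sigma>"
  shows "Ord1 k \<sigma> < 6 * real k / 5"
proof -
  let ?c = "\<lambda>b. \<Sum>t=1..4. charge (partner \<sigma>) (4*b-4+t)"
  have block: "?c b + (if \<exists>t\<in>{1..4}. blk (partner \<sigma> (4*b-4+t)) \<noteq> b then 1/40 else 0) \<le> 6/5"
    if "b \<in> {1..k}" for b
    using charge_block_le[OF _ that] partner_involution[OF assms(2)] by blast
  then have block_le: "?c b \<le> 6/5" if "b \<in> {1..k}" for b
    using that by (fastforce split: if_split_asm)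
  have "Ord1 k \<sigma> \<le> (\<Sum>b=1..k. ?c b)"
    using Ord1_le_sum_charge[OF assms(2)] sum_by_blocks by metis
  also have "\<dots> < (\<Sum>b=1..k. 6/5)"
  proof (rule sum_strict_mono_ex1)
    show "\<forall>b\<in>{1..k}. ?c b \<le> 6/5"
      using block_le by blast
    obtain b where "b \<in> {1..k}" "\<exists>t\<in>{1..4}. blk (partner \<sigma> (4*b-4+t)) \<noteq> b"
      using not_inD_cross_block[OF assms(2,3)] by blast
    moreover from this have "?c b < 6/5"
      using block[of b] by simp
    ultimately show "\<exists>b\<in>{1..k}. ?c b < 6/5" by blast
  qed simp
  finally show ?thesis by simp
qed

end
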